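(* Let $m\in\mathbb N$ and $\lambda\in X^+_{m+\infty}$, and let $\lambda^\natural\in X^+_{m|\infty}$ be as defined below. Then: (1) the degree of J-atypicality of $\lambda$ equals the degree of atypicality of $\lambda^\natural$; (2) $\lambda$ is J-typical if and only if $\lambda^\natural$ is typical.
   Context: $I(m|\infty)=\{-m,\dots,-1\}\cup\{1,2,\dots\}$. $X^+_{m+\infty}$ is the set of $\lambda=\sum_{i\in I(m|\infty)}\lambda_i\delta'_i$, $\lambda_i\in\mathbb Z$, with $\lambda_{-m}\ge\cdots\ge\lambda_{-1}$, $\lambda_1\ge\lambda_2\ge\cdots$ and $\lambda_i=0$ for $i\gg0$ (so $(\lambda_1,\lambda_2,\dots)$ is a partition); $X^+_{m|\infty}$ is defined likewise with symbols $\delta_i$. For $\lambda\in X^+_{m+\infty}$, let $(\lambda'_1,\lambda'_2,\dots)$ be the conjugate partition of $(\lambda_1,\lambda_2,\dots)$ and $\lambda^\natural=\sum_{i=-m}^{-1}\lambda_i\delta_i+\sum_{j\ge1}\lambda'_j\delta_j$. Super side: $(\delta_i|\delta_j)=-\mathrm{sgn}(i)\delta_{ij}$, $\rho=-\sum_i i\delta_i$. The degree of atypicality of $\mu\in X^+_{m|\infty}$ is the number of $i\in\{-m,\dots,-1\}$ such that $(\mu+\rho|\delta_i-\delta_j)=0$ for some $j>0$; $\mu$ is typical if it is $0$. Reductive side: $(\delta'_i|\delta'_j)_c=\delta_{ij}$, $\rho_c=-\sum_{i<0}i\delta'_i+\sum_{j>0}(1-j)\delta'_j$, and $f_\lambda:I(m|\infty)\to\mathbb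 Z$, $f_\lambda(i)=(\lambda+\rho_c|\delta'_i)_c$. For $f:I(m|\infty)\to\mathbb Z$ injective on negative indices and on positive indices, a pair $(i|j)$ with $i<0<j$ is an atypical pair if $f(i)>f(j)$, $f(i)\ne f(k)$ for all $k>0$ and $f(l)\ne f(j)$ for all $l<0$; its distance is $f(i)-f(j)$. Two pairs are disjoint if they share neither first nor second entry. Recursively for $k\ge1$ let $\Sigma^k_f$ be the set of atypical pairs of distance $k$ disjoint from all pairs in $\Sigma^1_f\cup\cdots\cup\Sigma^{k-1}_f$, and $\Sigma^+_f=\bigcup_k\Sigma^k_f$. The degree of J-atypicality of $\lambda$ is $|\Sigma^+_{f_\lambda}|$. The Bruhat ordering on functions $I(m|\infty)\to\mathbb Z$ is the transitive closure of $f<f\cdot\tau_{ij}$ for $i<j$ with $f(i)<f(j)$ ($(f\cdot\tau)(k)=f(\tau(k))$, $\tau_{ij}$ a transposition); $\lambda$ is J-typical if $f_\lambda$ is minimal in this ordering among $\{f_\mu:\mu\in X^+_{m+\infty}\}$. *)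

theory Defs
  imports Main
begin

text \<open>Weights are represented by their coefficient functions int => int
  (coefficient of delta'_i resp. delta_i); coefficients outside the index set are 0.\<close>

definition idx :: "nat \<Rightarrow> int set" where
  "idx m = {i. - int m \<le> i \<and> i \<le> -1} \<union> {i. 1 \<le> i}"

definition Xplus_red :: "nat \<Rightarrow> (int \<Rightarrow> int) set" where
  "Xplus_red m = {lam.
      (\<forall>i. i \<notin> idx m \<longrightarrow> lam i = 0) \<and>
      (\<forall>i. - int m \<le> i \<and> i < -1 \<longrightarrow> lam i \<ge> lam (i + 1)) \<and>
      (\<forall>i. 1 \<le> i \<longrightarrow> lam i \<ge> lam (i + 1)) \<and>
      (\<exists>N. \<forall>i\<ge>N. lam i = 0)}"

definition Xplus_super :: "nat \<Rightarrow> (int \<Rightarrow> int) set" where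
  "Xplus_super m = {mu.
      (\<forall>i. i \<notin> idx m \<longrightarrow> mu i = 0) \<and>
      (\<forall>i. - int m \<le> i \<and> i < -1 \<longrightarrow> mu i \<ge> mu (i + 1)) \<and>
      (\<forall>i. 1 \<le> i \<longrightarrow> mu i \<ge> mu (i + 1)) \<and>
      (\<exists>N. \<forall>i\<ge>N. mu i = 0)}"

text \<open>lambda-natural: negative part unchanged, positive part replaced by the conjugate partition.\<close>
definition natural :: "nat \<Rightarrow> (int \<Rightarrow> int) \<Rightarrow> (int \<Rightarrow> int)" where
  "natural m lam = (\<lambda>i. if - int m \<le> i \<and> i \<le> -1 then lam i
                        else if 1 \<le> i then int (card {k::nat. 1 \<le> k \<and> lam (int k) \<ge> i})
                        else 0)"

definition rho_super :: "int \<Rightarrow> int" where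
  "rho_super i = - i"

text \<open>(v | delta_k) for (delta_i|delta_j) = -sgn(i) delta_ij.\<close>
definition pair_super :: "(int \<Rightarrow> int) \<Rightarrow> int \<Rightarrow> int" where
  "pair_super v k = - sgn k * v k"

definition atyp_degree :: "nat \<Rightarrow> (int \<Rightarrow> int) \<Rightarrow> nat" where
  "atyp_degree m mu = card {i. - int m \<le> i \<and> i \<le> -1 \<and>
      (\<exists>j>0. pair_super (\<lambda>k. mu k + rho_super k) i
             - pair_super (\<lambda>k. mu k + rho_super k) j = 0)}"

definition typical :: "nat \<Rightarrow> (int \<Rightarrow> int) \<Rightarrow> bool" where
  "typical m mu \<longleftrightarrow> atyp_degree m mu = 0"

definition rho_c :: "int \<Rightarrow> int" where
  "rho_c i = (if i < 0 then - i else 1 - i)"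

definition f_lam :: "nat \<Rightarrow> (int \<Rightarrow> int) \<Rightarrow> (int \<Rightarrow> int)" where
  "f_lam m lam = (\<lambda>i. if i \<in> idx m then lam i + rho_c i else 0)"

definition atyp_pair :: "nat \<Rightarrow> (int \<Rightarrow> int) \<Rightarrow> int \<times> int \<Rightarrow> bool" where
  "atyp_pair m f p \<longleftrightarrow> (case p of (i, j) \<Rightarrow>
      - int m \<le> i \<and> i < 0 \<and> 0 < j \<and> f i > f j \<and>
      (\<forall>k>0. f i \<noteq> f k) \<and> (\<forall>l. - int m \<le> l \<and> l < 0 \<longrightarrow> f l \<noteq> f j))"

definition pair_dist :: "(int \<Rightarrow> int) \<Rightarrow> int \<times> int \<Rightarrow> int" where
  "pair_dist f p = f (fst p) - f (snd p)"

definition disjoint_pairs :: "int \<times> int \<Rightarrow> int \<times> int \<Rightarrow> bool" where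
  "disjoint_pairs p q \<longleftrightarrow> fst p \<noteq> fst q \<and> snd p \<noteq> snd q"

fun sigma_upto :: "nat \<Rightarrow> (int \<Rightarrow> int) \<Rightarrow> nat \<Rightarrow> (int \<times> int) set" where
  "sigma_upto m f 0 = {}"
| "sigma_upto m f (Suc k) = sigma_upto m f k \<union>
     {p. atyp_pair m f p \<and> pair_dist f p = int (Suc k) \<and>
         (\<forall>q \<in> sigma_upto m f k. disjoint_pairs p q)}"

definition sigma_plus :: "nat \<Rightarrow> (int \<Rightarrow> int) \<Rightarrow> (int \<times> int) set" where
  "sigma_plus m f = (\<Union>k. sigma_upto m f k)"

definition J_atyp_degree :: "nat \<Rightarrow> (int \<Rightarrow> int) \<Rightarrow> nat" where
  "J_atyp_degree m lam = card (sigma_plus m (f_lam m lam))"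

definition bruhat_step :: "nat \<Rightarrow> (int \<Rightarrow> int) \<Rightarrow> (int \<Rightarrow> int) \<Rightarrow> bool" where
  "bruhat_step m f g \<longleftrightarrow> (\<exists>i j. i \<in> idx m \<and> j \<in> idx m \<and> i < j \<and> f i < f j \<and>
      g = (\<lambda>k. f (if k = i then j else if k = j then i else k)))"

definition bruhat_less :: "nat \<Rightarrow> (int \<Rightarrow> int) \<Rightarrow> (int \<Rightarrow> int) \<Rightarrow> bool" where
  "bruhat_less m = tranclp (bruhat_step m)"

definition J_typical :: "nat \<Rightarrow> (int \<Rightarrow> int) \<Rightarrow> bool" where
  "J_typical m lam \<longleftrightarrow> \<not> (\<exists>mu \<in> Xplus_red m. bruhat_less m (f_lam m mu) (f_lam m lam))"

end

theory Submission
  imports Defs "HOL-Combinatorics.Transposition" "HOL-Library.Groups_Big_Fun"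
begin

text \<open>Write \<open>F = f\<^sub>\<lambda>\<close>; it is strictly decreasing on the negative and on the positive
  indices, and by the complementarity of \<open>{\<lambda>\<^sub>k + 1 - k}\<close> and \<open>{j - \<lambda>'\<^sub>j}\<close> for conjugate
  partitions, \<open>i < 0\<close> is atypical for \<open>\<lambda>\<^sup>\<natural>\<close> iff \<open>F i\<close> is not a value of \<open>F\<close> on the
  positive indices. \<open>\<Sigma>\<^sup>+\<close> matches exactly these indices: its first entries are distinct,
  and an unmatched one would force infinitely many second entries.
  For J-typicality, Bruhat moves preserve the multiplicities of values, which pin down \<open>F\<close>
  when there is no atypical index; otherwise an atypical pair of minimal distance yields an
  explicit exchange of two blocks giving a dominant function below \<open>F\<close>.\<close>

lemma int_antimono_by_steps:
  fixes h :: "int \<Rightarrow> int"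
  assumes "x \<le> y" and "\<And>z. x \<le> z \<Longrightarrow> z < y \<Longrightarrow> h (z + 1) \<le> h z"
  shows "h y \<le> h x"
  using assms
proof (induction y rule: int_ge_induct)
  case (step y)
  have "h y \<le> h x" using step by simp
  moreover have "h (y + 1) \<le> h y" using step.hyps step.prems[of y] by simp
  ultimately show ?case by simp
qed simp

lemma int_descent_by_steps:
  fixes h :: "int \<Rightarrow> int"
  assumes "x \<le> y" and "\<And>z. x \<le> z \<Longrightarrow> z < y \<Longrightarrow> h (z + 1) < h z"
  shows "h y + (y - x) \<le> h x"
proof -
  have "h y + y \<le> h x + x"
    using int_antimono_by_steps[of x y "\<lambda>z. h z + z"] assms by fastforce
  then show ?thesis by simp
qed

lemma ex_threshold_of_decreasing:
  fixes a :: "int \<Rightarrow> int"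
  assumes "\<And>k. 1 \<le> k \<Longrightarrow> a (k + 1) < a k"
  obtains n where "1 \<le> n" "\<And>k. 1 \<le> k \<Longrightarrow> a k < x \<longleftrightarrow> n \<le> k"
proof -
  have descent: "a l + (l - k) \<le> a k" if "1 \<le> k" "k \<le> l" for k l
    using int_descent_by_steps[of k l a] assms that by simp
  have "a (int (nat (a 1 - x + 1)) + 1) < x"
    using descent[of 1 "int (nat (a 1 - x + 1)) + 1"] by linarith
  then obtain n :: nat where n: "a (int n + 1) < x"
    and least: "\<And>n'. n' < n \<Longrightarrow> \<not> a (int n' + 1) < x"
    using exists_least_iff[of "\<lambda>n. a (int n + 1) < x"] by blast
  show thesis
  proof (rule that[of "int n + 1"])
    fix k :: int
    assume "1 \<le> k"
    show "a k < x \<longleftrightarrow> int n + 1 \<le> k"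
    proof
      assume "a k < x"
      then have "\<not> nat (k - 1) < n"
        using least[of "nat (k - 1)"] \<open>1 \<le> k\<close> by auto
      then show "int n + 1 \<le> k" using \<open>1 \<le> k\<close> by linarith
    next
      assume "int n + 1 \<le> k"
      then show "a k < x" using descent[of "int n + 1" k] n by simp
    qed
  qed simp
qed

lemma strict_antimono_on_eq_if_image_eq:
  fixes f g :: "'a::linorder \<Rightarrow> 'b::linorder"
  assumes f: "strict_antimono_on S f" and g: "strict_antimono_on S g" and image: "f ` S = g ` S"
    and finite: "\<And>t. finite {s\<in>S. s < t}" and "t \<in> S"
  shows "f t = g t"
proof -
  have card_above: "card {y \<in> h ` S. h u < y} = card {s\<in>S. s < u}"
    if h: "strict_antimono_on S h" and "u \<in> S" for h :: "'a \<Rightarrow> 'b" and u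
  proof -
    have less_iff: "h u < h s \<longleftrightarrow> s < u" if "s \<in> S" for s
      using monotone_onD[OF h \<open>u \<in> S\<close> \<open>s \<in> S\<close>] monotone_onD[OF h \<open>s \<in> S\<close> \<open>u \<in> S\<close>]
      by (metis less_asym linorder_neqE)
    have "{y \<in> h ` S. h u < y} = h ` {s\<in>S. s < u}"
      using less_iff by auto
    moreover have "inj_on h S"
      using h strict_antimono_iff_antimono by blast
    ultimately show ?thesis
      by (simp add: card_image inj_on_subset)
  qed
  have card_strict_mono: "card {s\<in>S. s < t1} < card {s\<in>S. s < t2}"
    if "t1 < t2" "t1 \<in> S" for t1 t2
    using that finite by (intro psubset_card_mono) auto
  obtain t' where t': "t' \<in> S" "f t = g t'"
    using image \<open>t \<in> S\<close> by (metis image_iff)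
  have "card {s\<in>S. s < t} = card {s\<in>S. s < t'}"
    using card_above[OF f \<open>t \<in> S\<close>] card_above[OF g t'(1)] t'(2) image by simp
  then have "t = t'"
    using card_strict_mono[of t t'] card_strict_mono[of t' t] \<open>t \<in> S\<close> t'(1)
    by (metis less_irrefl linorder_neqE)
  with t' show ?thesis by simp
qed

lemma card_fiber_inj_on: "inj_on f A \<Longrightarrow> card {x \<in> A. f x = v} = of_bool (v \<in> f ` A)"
proof (cases "v \<in> f ` A")
  case True
  then obtain a where "a \<in> A" "f a = v"
    by blast
  moreover assume "inj_on f A"
  ultimately have "{x \<in> A. f x = v} = {a}"
    by (auto dest: inj_onD)
  then show ?thesis
    using True by simp
next
  case False
  then have "{x \<in> A. f x = v} = {}"
    by auto
  then show ?thesis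
    using False by (simp only: card.empty of_bool_eq(1))
qed

lemma of_bool_add_eq_iff:
  "of_bool a + of_bool b = (of_bool c + of_bool d :: nat) \<longleftrightarrow> (a \<and> b \<longleftrightarrow> c \<and> d) \<and> (a \<or> b \<longleftrightarrow> c \<or> d)"
  by (cases a; cases b; cases c; cases d) simp_all

section \<open>Conjugate partitions\<close>

definition is_partition :: "(int \<Rightarrow> int) \<Rightarrow> bool" where
  "is_partition p \<longleftrightarrow> (\<forall>k\<ge>1. p (k + 1) \<le> p k) \<and> (\<exists>N. \<forall>k\<ge>N. p k = 0)"

definition conjugate :: "(int \<Rightarrow> int) \<Rightarrow> int \<Rightarrow> int" where
  "conjugate p j = int (card {k::nat. 1 \<le> k \<and> j \<le> p (int k)})"

lemma is_partition_Xplus_red: "lam \<in> Xplus_red m \<Longrightarrow> is_partition lam"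
  by (auto simp: Xplus_red_def is_partition_def)

lemma natural_pos: "1 \<le> j \<Longrightarrow> natural m lam j = conjugate lam j"
  by (simp add: natural_def conjugate_def)

context
  fixes p :: "int \<Rightarrow> int"
  assumes p: "is_partition p"
begin

lemma partition_antimono: "1 \<le> k \<Longrightarrow> k \<le> l \<Longrightarrow> p l \<le> p k"
  using p int_antimono_by_steps[of k l p] by (auto simp: is_partition_def)

lemma partition_nonneg:
  assumes "1 \<le> k"
  shows "0 \<le> p k"
proof -
  obtain N where "\<forall>k\<ge>N. p k = 0"
    using p by (auto simp: is_partition_def)
  then show ?thesis
    using partition_antimono[of k "max k N"] assms by simp
qed

lemma finite_partition_ge:
  assumes "0 < j"
  shows "finite {k::nat. 1 \<le> k \<and> j \<le> p (int k)}"
proof -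
  obtain N where N: "\<forall>k\<ge>N. p k = 0"
    using p by (auto simp: is_partition_def)
  have "{k::nat. 1 \<le> k \<and> j \<le> p (int k)} \<subseteq> {..nat N}"
  proof
    fix k
    assume "k \<in> {k::nat. 1 \<le> k \<and> j \<le> p (int k)}"
    then have "p (int k) \<noteq> 0"
      using \<open>0 < j\<close> by auto
    then have "int k < N"
      using N by (meson not_le)
    then show "k \<in> {..nat N}"
      by simp
  qed
  then show ?thesis
    by (rule finite_subset) simp
qed

lemma le_conjugate_iff:
  assumes "0 < j" "1 \<le> k"
  shows "k \<le> conjugate p j \<longleftrightarrow> j \<le> p k"
proof -
  define S where "S = {l::nat. 1 \<le> l \<and> j \<le> p (int l)}"
  have "finite S"
    using finite_partition_ge[OF \<open>0 < j\<close>] by (simp add: S_def)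
  show ?thesis
  proof
    assume "j \<le> p k"
    have "{1..nat k} \<subseteq> S"
    proof
      fix l
      assume "l \<in> {1..nat k}"
      then have "1 \<le> l" "int l \<le> k"
        by auto
      then show "l \<in> S"
        using partition_antimono[of "int l" k] \<open>j \<le> p k\<close> by (simp add: S_def)
    qed
    then have "nat k \<le> card S"
      using card_mono[OF \<open>finite S\<close>] by (metis card_atLeastAtMost diff_Suc_1)
    then show "k \<le> conjugate p j"
      unfolding conjugate_def S_def[symmetric] using \<open>1 \<le> k\<close> by simp
  next
    assume k: "k \<le> conjugate p j"
    show "j \<le> p k"
    proof (rule ccontr)
      assume "\<not> j \<le> p k"
      have "S \<subseteq> {1..<nat k}"
      proof
        fix l
        assume "l \<in> S"
        then have "1 \<le> l" "j \<le> p (int l)"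
          by (auto simp: S_def)
        then have "int l < k"
          using partition_antimono[of k "int l"] \<open>1 \<le> k\<close> \<open>\<not> j \<le> p k\<close> by linarith
        then show "l \<in> {1..<nat k}"
          using \<open>1 \<le> l\<close> by simp
      qed
      then have "card S < nat k"
        using card_mono[OF finite_atLeastLessThan \<open>S \<subseteq> {1..<nat k}\<close>] \<open>1 \<le> k\<close> by simp
      then show False
        using k unfolding conjugate_def S_def[symmetric] by simp
    qed
  qed
qed

lemma conjugate_eqI:
  assumes "0 < j" "0 \<le> c" and threshold: "\<And>k. 1 \<le> k \<Longrightarrow> j \<le> p k \<longleftrightarrow> k \<le> c"
  shows "conjugate p j = c"
proof -
  have le_iff: "k \<le> conjugate p j \<longleftrightarrow> k \<le> c" if "1 \<le> k" for k
    using le_conjugate_iff[OF \<open>0 < j\<close> that] threshold[OF that] by simp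
  have "conjugate p j \<le> c"
  proof (cases "1 \<le> conjugate p j")
    case True
    then show ?thesis
      using le_iff[OF True] by simp
  qed (use \<open>0 \<le> c\<close> in simp)
  moreover have "c \<le> conjugate p j"
  proof (cases "1 \<le> c")
    case True
    then show ?thesis
      using le_iff[OF True] by simp
  qed (simp add: conjugate_def)
  ultimately show ?thesis
    by simp
qed

lemma diff_conjugate_notin_range:
  assumes "1 \<le> j"
  shows "j - conjugate p j \<notin> (\<lambda>k. p k + 1 - k) ` {1..}"
proof
  assume "j - conjugate p j \<in> (\<lambda>k. p k + 1 - k) ` {1..}"
  then obtain k where k: "1 \<le> k" "j - conjugate p j = p k + 1 - k"
    by auto
  show False
  proof (cases "j \<le> p k")
    case True
    then have "k \<le> conjugate p j"
      using le_conjugate_iff assms k by simp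
    then show False
      using k True by linarith
  next
    case False
    then have "\<not> k \<le> conjugate p j"
      using le_conjugate_iff assms k by simp
    then show False
      using k False by linarith
  qed
qed

lemma ex_diff_conjugate_eq:
  assumes x: "x \<notin> (\<lambda>k. p k + 1 - k) ` {1..}"
  shows "\<exists>j\<ge>1. x = j - conjugate p j"
proof -
  have "p (k + 1) + 1 - (k + 1) < p k + 1 - k" if "1 \<le> k" for k
    using partition_antimono[of k "k + 1"] that by simp
  then obtain n where n: "1 \<le> n" and below: "\<And>k. 1 \<le> k \<Longrightarrow> p k + 1 - k < x \<longleftrightarrow> n \<le> k"
    using ex_threshold_of_decreasing[of "\<lambda>k. p k + 1 - k"] by blast
  define j where "j = x + n - 1"
  have "p n + 1 - n < x"
    using below[of n] n by simp
  then have "1 \<le> j"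
    using partition_nonneg[OF n] by (simp add: j_def)
  have threshold: "j \<le> p k \<longleftrightarrow> k \<le> n - 1" if "1 \<le> k" for k
  proof
    assume "j \<le> p k"
    show "k \<le> n - 1"
    proof (rule ccontr)
      assume "\<not> k \<le> n - 1"
      then have "p k \<le> p n"
        using partition_antimono[of n k] n by simp
      then show False
        using \<open>j \<le> p k\<close> \<open>p n + 1 - n < x\<close> by (simp add: j_def)
    qed
  next
    assume "k \<le> n - 1"
    moreover have "p (n - 1) + 1 - (n - 1) \<in> (\<lambda>k. p k + 1 - k) ` {1..}"
      using \<open>1 \<le> k\<close> \<open>k \<le> n - 1\<close> by (intro imageI) simp
    then have "p (n - 1) + 1 - (n - 1) \<noteq> x"
      using x by auto
    ultimately show "j \<le> p k"
      using below[of "n - 1"] partition_antimono[of k "n - 1"] that by (simp add: j_def)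
  qed
  have "conjugate p j = n - 1"
    using \<open>1 \<le> j\<close> n by (intro conjugate_eqI[OF _ _ threshold]) simp_all
  then show ?thesis
    using \<open>1 \<le> j\<close> by (intro exI[of _ j]) (simp add: j_def)
qed

text \<open>The infinite form of Macdonald, Symmetric Functions and Hall Polynomials, I.(1.7).\<close>

lemma conjugate_range_complement:
  "(\<exists>j\<ge>1. x = j - conjugate p j) \<longleftrightarrow> x \<notin> (\<lambda>k. p k + 1 - k) ` {1..}"
  using diff_conjugate_notin_range ex_diff_conjugate_eq by auto

end

section \<open>The functions \<open>f\<^sub>\<lambda>\<close> of dominant weights\<close>

lemma idx_eq: "idx m = {- int m..-1} \<union> {1..}"
  by (auto simp: idx_def)

lemma f_lam_pos: "1 \<le> x \<Longrightarrow> f_lam m lam x = lam x + 1 - x"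
  by (simp add: f_lam_def idx_eq rho_c_def)

lemma f_lam_neg: "x \<in> {- int m..-1} \<Longrightarrow> f_lam m lam x = lam x - x"
  by (simp add: f_lam_def idx_eq rho_c_def)

definition dominant_fun :: "nat \<Rightarrow> (int \<Rightarrow> int) \<Rightarrow> bool" where
  "dominant_fun m f \<longleftrightarrow> (\<forall>x. x \<notin> idx m \<longrightarrow> f x = 0) \<and>
     (\<forall>x. - int m \<le> x \<and> x < -1 \<longrightarrow> f (x + 1) < f x) \<and>
     (\<forall>x\<ge>1. f (x + 1) < f x) \<and> (\<exists>N. \<forall>x\<ge>N. f x = 1 - x)"

lemma Xplus_redD:
  assumes "lam \<in> Xplus_red m"
  shows "\<And>x. - int m \<le> x \<Longrightarrow> x < -1 \<Longrightarrow> lam (x + 1) \<le> lam x"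
    and "\<And>x. 1 \<le> x \<Longrightarrow> lam (x + 1) \<le> lam x"
    and "\<exists>N. \<forall>x\<ge>N. lam x = 0"
  using assms by (auto simp: Xplus_red_def)

lemma dominant_funD:
  assumes "dominant_fun m f"
  shows "\<And>x. x \<notin> idx m \<Longrightarrow> f x = 0"
    and "\<And>x. - int m \<le> x \<Longrightarrow> x < -1 \<Longrightarrow> f (x + 1) < f x"
    and "\<And>x. 1 \<le> x \<Longrightarrow> f (x + 1) < f x"
    and "\<exists>N. \<forall>x\<ge>N. f x = 1 - x"
  using assms by (auto simp: dominant_fun_def)

lemma dominant_fun_f_lam:
  assumes lam: "lam \<in> Xplus_red m"
  shows "dominant_fun m (f_lam m lam)"
proof -
  obtain N where N: "\<forall>x\<ge>N. lam x = 0"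
    using Xplus_redD(3)[OF lam] by blast
  have "\<forall>x\<ge>max 1 N. f_lam m lam x = 1 - x"
    using N by (simp add: f_lam_pos)
  moreover have "f_lam m lam (x + 1) < f_lam m lam x" if "- int m \<le> x" "x < -1" for x
    using Xplus_redD(1)[OF lam that] that by (simp add: f_lam_neg)
  moreover have "f_lam m lam (x + 1) < f_lam m lam x" if "1 \<le> x" for x
    using Xplus_redD(2)[OF lam that] that by (simp add: f_lam_pos)
  moreover have "\<forall>x. x \<notin> idx m \<longrightarrow> f_lam m lam x = 0"
    by (simp add: f_lam_def)
  ultimately show ?thesis
    unfolding dominant_fun_def by blast
qed

lemma dominant_fun_imp_f_lam:
  assumes f: "dominant_fun m f"
  obtains lam where "lam \<in> Xplus_red m" "f = f_lam m lam"
proof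
  define lam where "lam x = (if x \<in> idx m then f x - rho_c x else 0)" for x
  show "f = f_lam m lam"
    using dominant_funD(1)[OF f] by (auto simp: f_lam_def lam_def)
  obtain N where N: "\<forall>x\<ge>N. f x = 1 - x"
    using dominant_funD(4)[OF f] by blast
  have "\<forall>x\<ge>max 1 N. lam x = 0"
    using N by (simp add: lam_def idx_eq rho_c_def)
  moreover have "lam (x + 1) \<le> lam x" if "- int m \<le> x" "x < -1" for x
    using dominant_funD(2)[OF f that] that by (simp add: lam_def idx_eq rho_c_def)
  moreover have "lam (x + 1) \<le> lam x" if "1 \<le> x" for x
    using dominant_funD(3)[OF f that] that by (simp add: lam_def idx_eq rho_c_def)
  moreover have "\<forall>x. x \<notin> idx m \<longrightarrow> lam x = 0"
    by (simp add: lam_def)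
  ultimately show "lam \<in> Xplus_red m"
    unfolding Xplus_red_def by blast
qed

lemma dominant_fun_iff_f_lam: "dominant_fun m f \<longleftrightarrow> f \<in> f_lam m ` Xplus_red m"
  using dominant_fun_f_lam dominant_fun_imp_f_lam by blast

context
  fixes m :: nat and f :: "int \<Rightarrow> int"
  assumes f: "dominant_fun m f"
begin

lemma dominant_fun_neg_less:
  assumes "- int m \<le> x" "x < y" "y \<le> -1"
  shows "f y < f x"
  using int_descent_by_steps[of x y f] dominant_funD[OF f] assms by force

lemma dominant_fun_pos_less:
  assumes "1 \<le> x" "x < y"
  shows "f y < f x"
  using int_descent_by_steps[of x y f] dominant_funD[OF f] assms by force

lemma dominant_fun_strict_antimono_neg: "strict_antimono_on {- int m..-1} f"
  by (auto intro!: monotone_onI dominant_fun_neg_less)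

lemma dominant_fun_strict_antimono_pos: "strict_antimono_on {1..} f"
  by (auto intro!: monotone_onI dominant_fun_pos_less)

lemma dominant_fun_inj_on_neg: "inj_on f {- int m..-1}"
  using strict_antimono_iff_antimono dominant_fun_strict_antimono_neg by blast

lemma dominant_fun_inj_on_pos: "inj_on f {1..}"
  using strict_antimono_iff_antimono dominant_fun_strict_antimono_pos by blast

lemma dominant_fun_neg_less_iff:
  assumes "x \<in> {- int m..-1}" "y \<in> {- int m..-1}"
  shows "f x < f y \<longleftrightarrow> y < x"
  using dominant_fun_neg_less assms by (metis atLeastAtMost_iff less_asym linorder_neqE)

lemma dominant_fun_pos_less_iff:
  assumes "1 \<le> x" "1 \<le> y"
  shows "f x < f y \<longleftrightarrow> y < x"
  using dominant_fun_pos_less assms by (metis less_asym linorder_neqE)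

lemma dominant_fun_pos_eventually_less: "\<exists>B\<ge>1. \<forall>b\<ge>B. f b < c"
proof (intro exI[of _ "max 1 (f 1 + 2 - c)"] conjI allI impI)
  fix b
  assume "max 1 (f 1 + 2 - c) \<le> b"
  then show "f b < c"
    using int_descent_by_steps[of 1 b f] dominant_funD(3)[OF f] by force
qed simp

end

section \<open>Atypical indices\<close>

definition atypical_indices :: "nat \<Rightarrow> (int \<Rightarrow> int) \<Rightarrow> int set" where
  "atypical_indices m f = {i \<in> {- int m..-1}. f i \<notin> f ` {1..}}"

lemma finite_atypical_indices: "finite (atypical_indices m f)"
  by (rule finite_subset[of _ "{- int m..-1}"]) (auto simp: atypical_indices_def)

lemma atyp_pair_iff:
  "atyp_pair m f (i, j) \<longleftrightarrow> i \<in> {- int m..-1} \<and> 1 \<le> j \<and> f j < f i \<and>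
     f i \<notin> f ` {1..} \<and> f j \<notin> f ` {- int m..-1}"
proof -
  have neg: "l < 0 \<longleftrightarrow> l \<le> -1" for l :: int
    by linarith
  show ?thesis
    unfolding atyp_pair_def image_iff
    by (auto simp: int_one_le_iff_zero_less neg) (metis atLeastAtMost_iff)
qed

lemma atyp_pair_fst: "atyp_pair m f p \<Longrightarrow> fst p \<in> atypical_indices m f"
  by (cases p) (simp add: atyp_pair_iff atypical_indices_def)

lemma eventually_atyp_pair:
  assumes f: "dominant_fun m f" and i: "i \<in> atypical_indices m f"
  shows "\<exists>B. \<forall>b\<ge>B. atyp_pair m f (i, b)"
proof -
  obtain B where B: "1 \<le> B" "\<forall>b\<ge>B. f b < f (-1)"
    using dominant_fun_pos_eventually_less[OF f] by blast
  have below_neg: "f b < f a" if "b \<ge> B" "a \<in> {- int m..-1}" for a b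
    using dominant_fun_neg_less[OF f, of a "-1"] B that by (cases "a = -1") auto
  show ?thesis
  proof (intro exI allI impI)
    fix b
    assume "B \<le> b"
    then have "f b \<notin> f ` {- int m..-1}"
      using below_neg[of b] by (metis image_iff order_less_irrefl)
    then show "atyp_pair m f (i, b)"
      using i B below_neg[of b i] \<open>B \<le> b\<close> by (auto simp: atyp_pair_iff atypical_indices_def)
  qed
qed

lemma atyp_degree_natural:
  assumes lam: "lam \<in> Xplus_red m"
  shows "atyp_degree m (natural m lam) = card (atypical_indices m (f_lam m lam))"
proof -
  let ?v = "\<lambda>k. natural m lam k + rho_super k"
  have "(\<exists>j>0. pair_super ?v i - pair_super ?v j = 0) \<longleftrightarrow> i \<in> atypical_indices m (f_lam m lam)"
    if i: "i \<in> {- int m..-1}" for i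
  proof -
    have "pair_super ?v i = f_lam m lam i"
      using i by (simp add: pair_super_def natural_def rho_super_def f_lam_neg)
    moreover have "pair_super ?v j = j - conjugate lam j" if "1 \<le> j" for j
      using that by (simp add: pair_super_def natural_pos rho_super_def)
    ultimately have "(\<exists>j>0. pair_super ?v i - pair_super ?v j = 0) \<longleftrightarrow>
        (\<exists>j\<ge>1. f_lam m lam i = j - conjugate lam j)"
      by (auto simp: int_one_le_iff_zero_less)
    also have "\<dots> \<longleftrightarrow> f_lam m lam i \<notin> (\<lambda>k. lam k + 1 - k) ` {1..}"
      by (rule conjugate_range_complement[OF is_partition_Xplus_red[OF lam]])
    also have "(\<lambda>k. lam k + 1 - k) ` {1..} = f_lam m lam ` {1..}"
      by (simp add: f_lam_pos)
    finally show ?thesis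
      using i by (simp add: atypical_indices_def)
  qed
  then have "{i. - int m \<le> i \<and> i \<le> -1 \<and> (\<exists>j>0. pair_super ?v i - pair_super ?v j = 0)}
      = atypical_indices m (f_lam m lam)"
    by (auto simp: atypical_indices_def)
  then show ?thesis
    by (simp add: atyp_degree_def)
qed

section \<open>The greedy matching \<open>\<Sigma>\<^sup>+\<close>\<close>

lemma sigma_upto_mono: "k \<le> n \<Longrightarrow> sigma_upto m f k \<subseteq> sigma_upto m f n"
  by (induction n) (auto simp: le_Suc_eq)

lemma sigma_upto_level:
  "p \<in> sigma_upto m f k \<Longrightarrow>
     0 < pair_dist f p \<and> pair_dist f p \<le> int k \<and> p \<in> sigma_upto m f (nat (pair_dist f p))"
proof (induction k)
  case (Suc k)
  show ?case
  proof (cases "p \<in> sigma_upto m f k")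
    case True
    then show ?thesis
      using Suc.IH by simp
  next
    case False
    then have "pair_dist f p = int (Suc k)"
      using Suc.prems by simp
    then show ?thesis
      using Suc.prems by (simp only: nat_int) simp
  qed
qed simp

lemma sigma_upto_eq: "sigma_upto m f k = {p \<in> sigma_plus m f. pair_dist f p \<le> int k}"
proof
  show "sigma_upto m f k \<subseteq> {p \<in> sigma_plus m f. pair_dist f p \<le> int k}"
    using sigma_upto_level by (auto simp: sigma_plus_def)
next
  show "{p \<in> sigma_plus m f. pair_dist f p \<le> int k} \<subseteq> sigma_upto m f k"
  proof safe
    fix p
    assume "p \<in> sigma_plus m f" "pair_dist f p \<le> int k"
    then obtain n where "p \<in> sigma_upto m f n"
      by (auto simp: sigma_plus_def)
    then show "p \<in> sigma_upto m f k"
      using sigma_upto_level sigma_upto_mono[of "nat (pair_dist f p)" k] \<open>pair_dist f p \<le> int k\<close>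
      by (metis nat_le_iff subsetD)
  qed
qed

lemma sigma_plus_iff:
  "p \<in> sigma_plus m f \<longleftrightarrow>
     atyp_pair m f p \<and> (\<forall>q\<in>sigma_plus m f. pair_dist f q < pair_dist f p \<longrightarrow> disjoint_pairs p q)"
proof -
  define k where "k = nat (pair_dist f p) - 1"
  have closer: "sigma_upto m f k = {q \<in> sigma_plus m f. pair_dist f q < pair_dist f p}"
    if "0 < pair_dist f p"
    using that by (auto simp: sigma_upto_eq k_def)
  have level: "p \<in> sigma_upto m f (Suc k) \<longleftrightarrow>
      p \<in> sigma_upto m f k \<or>
      atyp_pair m f p \<and> pair_dist f p = int (Suc k) \<and> (\<forall>q\<in>sigma_upto m f k. disjoint_pairs p q)"
    by simp
  show ?thesis
  proof
    assume "p \<in> sigma_plus m f"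
    then obtain n where "p \<in> sigma_upto m f n"
      by (auto simp: sigma_plus_def)
    then have d: "0 < pair_dist f p" and "p \<in> sigma_upto m f (Suc k)"
      using sigma_upto_level[of p m f n] by (simp_all add: k_def)
    moreover have "p \<notin> sigma_upto m f k"
      using closer[OF d] by simp
    ultimately show "atyp_pair m f p \<and>
        (\<forall>q\<in>sigma_plus m f. pair_dist f q < pair_dist f p \<longrightarrow> disjoint_pairs p q)"
      using level closer[OF d] by blast
  next
    assume p: "atyp_pair m f p \<and>
        (\<forall>q\<in>sigma_plus m f. pair_dist f q < pair_dist f p \<longrightarrow> disjoint_pairs p q)"
    then have d: "0 < pair_dist f p"
      by (cases p) (simp add: atyp_pair_def pair_dist_def)
    then have "pair_dist f p = int (Suc k)"
      by (simp add: k_def)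
    then have "p \<in> sigma_upto m f (Suc k)"
      using p closer[OF d] level by blast
    then show "p \<in> sigma_plus m f"
      unfolding sigma_plus_def by blast
  qed
qed

context
  fixes m :: nat and f :: "int \<Rightarrow> int"
  assumes f: "dominant_fun m f"
begin

lemma inj_on_fst_sigma_plus: "inj_on fst (sigma_plus m f)"
proof (rule inj_onI)
  fix p q
  assume p: "p \<in> sigma_plus m f" and q: "q \<in> sigma_plus m f" and "fst p = fst q"
  then have "\<not> disjoint_pairs p q" "\<not> disjoint_pairs q p"
    by (auto simp: disjoint_pairs_def)
  then have "\<not> pair_dist f q < pair_dist f p" "\<not> pair_dist f p < pair_dist f q"
    using p q sigma_plus_iff[of p m f] sigma_plus_iff[of q m f] by blast+
  then have "f (snd p) = f (snd q)"
    using \<open>fst p = fst q\<close> by (simp add: pair_dist_def)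
  moreover have "atyp_pair m f p" "atyp_pair m f q"
    using p q sigma_plus_iff by blast+
  then have "snd p \<in> {1..}" "snd q \<in> {1..}"
    by (metis atLeast_iff atyp_pair_iff prod.collapse)+
  ultimately have "snd p = snd q"
    using dominant_fun_inj_on_pos[OF f] by (auto dest: inj_onD)
  with \<open>fst p = fst q\<close> show "p = q"
    by (simp add: prod_eq_iff)
qed

lemma fst_sigma_plus_subset: "fst ` sigma_plus m f \<subseteq> atypical_indices m f"
  using sigma_plus_iff atyp_pair_fst by blast

lemma finite_sigma_plus: "finite (sigma_plus m f)"
  using finite_subset[OF fst_sigma_plus_subset finite_atypical_indices]
  by (rule finite_imageD[OF _ inj_on_fst_sigma_plus])

lemma fst_sigma_plus: "fst ` sigma_plus m f = atypical_indices m f"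
proof
  show "atypical_indices m f \<subseteq> fst ` sigma_plus m f"
  proof
    fix i
    assume i: "i \<in> atypical_indices m f"
    show "i \<in> fst ` sigma_plus m f"
    proof (rule ccontr)
      assume unmatched: "i \<notin> fst ` sigma_plus m f"
      obtain B where B: "\<forall>b\<ge>B. atyp_pair m f (i, b)"
        using eventually_atyp_pair[OF f i] by blast
      have "{B..} \<subseteq> snd ` sigma_plus m f"
      proof
        fix b
        assume "b \<in> {B..}"
        then have "atyp_pair m f (i, b)"
          using B by simp
        moreover have "(i, b) \<notin> sigma_plus m f"
          using unmatched by (metis fst_conv image_eqI)
        ultimately obtain q where q: "q \<in> sigma_plus m f" "\<not> disjoint_pairs (i, b) q"
          using sigma_plus_iff[of "(i, b)" m f] by blast
        moreover have "fst q \<noteq> i"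
          using unmatched q(1) by (metis image_eqI)
        ultimately show "b \<in> snd ` sigma_plus m f"
          by (metis disjoint_pairs_def fst_conv snd_conv image_eqI)
      qed
      moreover have "finite (snd ` sigma_plus m f)"
        using finite_sigma_plus by (rule finite_imageI)
      ultimately show False
        using infinite_Ici finite_subset by blast
    qed
  qed
qed (rule fst_sigma_plus_subset)

lemma card_sigma_plus: "card (sigma_plus m f) = card (atypical_indices m f)"
  using card_image[OF inj_on_fst_sigma_plus] fst_sigma_plus by simp

end

section \<open>The Bruhat ordering\<close>

lemma bruhat_stepE:
  assumes "bruhat_step m f g"
  obtains i j where "i \<in> idx m" "j \<in> idx m" "i < j" "f i < f j" "g = f \<circ> transpose i j"
  using assms by (auto simp: bruhat_step_def transpose_def comp_def)

lemma bruhat_step_fiber_card: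
  assumes "bruhat_step m f g"
  shows "card {x \<in> idx m. g x = v} = card {x \<in> idx m. f x = v}"
proof -
  obtain i j where "i \<in> idx m" "j \<in> idx m" and g: "g = f \<circ> transpose i j"
    using assms by (rule bruhat_stepE)
  then have "transpose i j x \<in> idx m \<longleftrightarrow> x \<in> idx m" for x
    by (auto simp: transpose_def)
  then have "{x \<in> idx m. g x = v} = transpose i j ` {x \<in> idx m. f x = v}"
    by (auto simp: in_transpose_image_iff g)
  then show ?thesis
    by (simp add: card_image)
qed

lemma bruhat_less_fiber_card:
  "bruhat_less m f g \<Longrightarrow> card {x \<in> idx m. g x = v} = card {x \<in> idx m. f x = v}"
  unfolding bruhat_less_def
proof (induction rule: tranclp_induct)
  case (step g h)
  then show ?case
    using bruhat_step_fiber_card[OF step.hyps(2)] by simp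
qed (rule bruhat_step_fiber_card)

text \<open>Each Bruhat step lowers the potential \<open>\<Sum>\<^sub>x x \<cdot> f x\<close>; as only finitely many values
  change, the decrease is the finite sum \<open>Sum_any (\<lambda>x. x * (g x - f x))\<close>.\<close>

lemma bruhat_step_potential:
  assumes "bruhat_step m f g"
  shows "finite {x. x * (g x - f x) \<noteq> 0} \<and> Sum_any (\<lambda>x. x * (g x - f x)) < 0"
proof -
  obtain i j where "i < j" "f i < f j" and g: "g = f \<circ> transpose i j"
    using assms by (rule bruhat_stepE)
  have support: "{x. x * (g x - f x) \<noteq> 0} \<subseteq> {i, j}"
    by (auto simp: g transpose_def)
  then have "Sum_any (\<lambda>x. x * (g x - f x)) = (\<Sum>x\<in>{i, j}. x * (g x - f x))"
    by (intro Sum_any.expand_superset) simp_all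
  also have "\<dots> = - ((j - i) * (f j - f i))"
    using \<open>i < j\<close> by (simp add: g algebra_simps)
  also have "\<dots> < 0"
    using \<open>i < j\<close> \<open>f i < f j\<close> by simp
  finally show ?thesis
    using finite_subset[OF support] by simp
qed

lemma bruhat_less_potential:
  "bruhat_less m f g \<Longrightarrow> finite {x. x * (g x - f x) \<noteq> 0} \<and> Sum_any (\<lambda>x. x * (g x - f x)) < 0"
  unfolding bruhat_less_def
proof (induction rule: tranclp_induct)
  case (base g)
  then show ?case
    by (rule bruhat_step_potential)
next
  case (step g h)
  have last: "finite {x. x * (h x - g x) \<noteq> 0}" "Sum_any (\<lambda>x. x * (h x - g x)) < 0"
    using bruhat_step_potential[OF step.hyps(2)] by auto
  have split: "x * (h x - f x) = x * (h x - g x) + x * (g x - f x)" for x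
    by (simp add: algebra_simps)
  have "{x. x * (h x - f x) \<noteq> 0} \<subseteq> {x. x * (h x - g x) \<noteq> 0} \<union> {x. x * (g x - f x) \<noteq> 0}"
    unfolding split by auto
  then have "finite {x. x * (h x - f x) \<noteq> 0}"
    using last step.IH finite_subset by blast
  moreover have "Sum_any (\<lambda>x. x * (h x - f x)) =
      Sum_any (\<lambda>x. x * (h x - g x)) + Sum_any (\<lambda>x. x * (g x - f x))"
    unfolding split using last step.IH by (intro Sum_any.distrib) auto
  ultimately show ?case
    using last step.IH by simp
qed

lemma bruhat_less_irrefl: "\<not> bruhat_less m f f"
  using bruhat_less_potential[of m f f] by force

section \<open>J-typicality\<close>

lemma dominant_fun_fiber_card:
  assumes "dominant_fun m f"
  shows "card {x \<in> idx m. f x = v} = of_bool (v \<in> f ` {- int m..-1}) + of_bool (v \<in> f ` {1..})"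
proof -
  have split: "{x \<in> idx m. f x = v} = {x \<in> {- int m..-1}. f x = v} \<union> {x \<in> {1..}. f x = v}"
    by (auto simp: idx_eq)
  have "finite {x \<in> {- int m..-1}. f x = v}"
    by (rule finite_subset[of _ "{- int m..-1}"]) auto
  moreover have "{x \<in> {1..}. f x = v} = f -` {v} \<inter> {1..}"
    by auto
  then have "finite {x \<in> {1..}. f x = v}"
    using finite_vimage_IntI[OF _ dominant_fun_inj_on_pos[OF assms]] by simp
  ultimately have "card {x \<in> idx m. f x = v} =
      card {x \<in> {- int m..-1}. f x = v} + card {x \<in> {1..}. f x = v}"
    unfolding split by (intro card_Un_disjoint) auto
  then show ?thesis
    using card_fiber_inj_on[OF dominant_fun_inj_on_neg[OF assms]]
      card_fiber_inj_on[OF dominant_fun_inj_on_pos[OF assms]] by simp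
qed

lemma dominant_fun_eqI:
  assumes f: "dominant_fun m f" and g: "dominant_fun m g"
    and neg: "f ` {- int m..-1} = g ` {- int m..-1}" and pos: "f ` {1..} = g ` {1..}"
  shows "f = g"
proof
  fix x
  have finite_neg: "finite {s \<in> {- int m..-1}. s < t}" for t
    by (rule finite_subset[of _ "{- int m..-1}"]) auto
  have finite_pos: "finite {s \<in> {1::int..}. s < t}" for t
    by (rule finite_subset[of _ "{1..t}"]) auto
  consider "x \<in> {- int m..-1}" | "x \<in> {1..}" | "x \<notin> idx m"
    by (auto simp: idx_eq)
  then show "f x = g x"
  proof cases
    case 1
    then show ?thesis
      by (rule strict_antimono_on_eq_if_image_eq[OF dominant_fun_strict_antimono_neg[OF f]
            dominant_fun_strict_antimono_neg[OF g] neg finite_neg])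
  next
    case 2
    then show ?thesis
      by (rule strict_antimono_on_eq_if_image_eq[OF dominant_fun_strict_antimono_pos[OF f]
            dominant_fun_strict_antimono_pos[OF g] pos finite_pos])
  next
    case 3
    then show ?thesis
      using dominant_funD(1)[OF f] dominant_funD(1)[OF g] by simp
  qed
qed

text \<open>Bruhat moves preserve value multiplicities; when every value of \<open>f\<close> on the negative
  indices recurs on the positive ones, these force \<open>g\<close> to take the same values as \<open>f\<close> on
  each side.\<close>

lemma not_bruhat_less_if_typical:
  assumes f: "dominant_fun m f" and g: "dominant_fun m g" and typical: "atypical_indices m f = {}"
  shows "\<not> bruhat_less m g f"
proof
  assume less: "bruhat_less m g f"
  define fN fP gN gP where "fN = f ` {- int m..-1}" and "fP = f ` {1..}"
    and "gN = g ` {- int m..-1}" and "gP = g ` {1..}"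
  have "of_bool (v \<in> fN) + of_bool (v \<in> fP) = (of_bool (v \<in> gN) + of_bool (v \<in> gP) :: nat)" for v
    using bruhat_less_fiber_card[OF less, of v]
      dominant_fun_fiber_card[OF f] dominant_fun_fiber_card[OF g]
    by (simp add: fN_def fP_def gN_def gP_def)
  then have twice: "fN \<inter> fP = gN \<inter> gP" and once: "fN \<union> fP = gN \<union> gP"
    unfolding of_bool_add_eq_iff by blast+
  have recurs: "fN \<subseteq> fP"
    using typical by (auto simp: atypical_indices_def fN_def fP_def)
  have "card fN = card gN"
    using card_image[OF dominant_fun_inj_on_neg[OF f]] card_image[OF dominant_fun_inj_on_neg[OF g]]
    by (simp add: fN_def gN_def)
  moreover have "fN \<subseteq> gN"
    using twice recurs by blast
  ultimately have neg: "fN = gN"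
    using card_subset_eq[of gN fN] by (simp add: gN_def)
  with once twice recurs have pos: "fP = gP"
    by blast
  have "f = g"
    using dominant_fun_eqI[OF f g] neg pos by (simp add: fN_def fP_def gN_def gP_def)
  with less show False
    using bruhat_less_irrefl by blast
qed

definition block_swap :: "int \<Rightarrow> int \<Rightarrow> nat \<Rightarrow> int \<Rightarrow> int" where
  "block_swap a d n x = (if a \<le> x \<and> x < a + int n then x + d
     else if a + d \<le> x \<and> x < a + d + int n then x - d else x)"

lemma block_swap_0: "block_swap a d 0 = id"
  by (auto simp: block_swap_def)

lemma block_swap_Suc:
  "int s < d \<Longrightarrow> block_swap a d (Suc s) = block_swap a d s \<circ> transpose (a + int s) (a + int s + d)"
  by (rule ext) (auto simp: block_swap_def transpose_def)

lemma block_swap_involutive: "int n \<le> d \<Longrightarrow> block_swap a d n (block_swap a d n x) = x"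
  by (auto simp: block_swap_def)

lemma bruhat_stepI:
  "i \<in> idx m \<Longrightarrow> j \<in> idx m \<Longrightarrow> i < j \<Longrightarrow> f i < f j \<Longrightarrow> bruhat_step m f (f \<circ> transpose i j)"
  by (auto simp: bruhat_step_def transpose_def comp_def)

lemma bruhat_less_block_swap_chain:
  assumes "int n \<le> d" and "1 \<le> s" "s \<le> n"
    and pairs: "\<And>s. s < n \<Longrightarrow>
      a + int s \<in> idx m \<and> a + int s + d \<in> idx m \<and> g (a + int s) < g (a + int s + d)"
  shows "bruhat_less m g (g \<circ> block_swap a d s)"
  using \<open>1 \<le> s\<close> \<open>s \<le> n\<close>
proof (induction s)
  case (Suc s)
  have "block_swap a d s (a + int s) = a + int s" "block_swap a d s (a + int s + d) = a + int s + d"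
    using Suc.prems \<open>int n \<le> d\<close> by (auto simp: block_swap_def)
  then have "bruhat_step m (g \<circ> block_swap a d s)
      (g \<circ> block_swap a d s \<circ> transpose (a + int s) (a + int s + d))"
    using pairs[of s] Suc.prems \<open>int n \<le> d\<close> by (intro bruhat_stepI) auto
  moreover have "g \<circ> block_swap a d s \<circ> transpose (a + int s) (a + int s + d) =
      g \<circ> block_swap a d (Suc s)"
    using Suc.prems \<open>int n \<le> d\<close> by (simp add: block_swap_Suc comp_assoc)
  ultimately have step: "bruhat_step m (g \<circ> block_swap a d s) (g \<circ> block_swap a d (Suc s))"
    by simp
  show ?case
  proof (cases "s = 0")
    case True
    then have "g \<circ> block_swap a d s = g"
      by (simp add: block_swap_0)
    then show ?thesis
      using step unfolding bruhat_less_def by (metis tranclp.r_into_trancl)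
  next
    case False
    then have "bruhat_less m g (g \<circ> block_swap a d s)"
      using Suc.prems by (intro Suc.IH) auto
    then show ?thesis
      using step unfolding bruhat_less_def by (metis tranclp.trancl_into_trancl)
  qed
qed simp

lemma bruhat_less_block_swap:
  assumes "0 < n" "int n \<le> d"
    and pairs: "\<And>s. s < n \<Longrightarrow>
      a + int s \<in> idx m \<and> a + int s + d \<in> idx m \<and> f (a + int s + d) < f (a + int s)"
  shows "bruhat_less m (f \<circ> block_swap a d n) f"
proof -
  have "block_swap a d n (a + int s) = a + int s + d" "block_swap a d n (a + int s + d) = a + int s"
    if "s < n" for s
    using that \<open>int n \<le> d\<close> by (auto simp: block_swap_def)
  then have "bruhat_less m (f \<circ> block_swap a d n) (f \<circ> block_swap a d n \<circ> block_swap a d n)"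
    using assms by (intro bruhat_less_block_swap_chain[of n]) auto
  moreover have "f \<circ> block_swap a d n \<circ> block_swap a d n = f"
    using \<open>int n \<le> d\<close> by (simp add: fun_eq_iff block_swap_involutive)
  ultimately show ?thesis
    by simp
qed

lemma ex_minimal_atyp_pair:
  assumes f: "dominant_fun m f" and "atypical_indices m f \<noteq> {}"
  obtains i j where "atyp_pair m f (i, j)" "\<And>a b. atyp_pair m f (a, b) \<Longrightarrow> f i - f j \<le> f a - f b"
proof -
  obtain i0 where "i0 \<in> atypical_indices m f"
    using assms(2) by blast
  then obtain B where "\<forall>b\<ge>B. atyp_pair m f (i0, b)"
    using eventually_atyp_pair[OF f] by blast
  then have "atyp_pair m f (i0, B)"
    by simp
  then obtain p where p: "atyp_pair m f p"
    and least: "\<And>q. atyp_pair m f q \<Longrightarrow> nat (pair_dist f p) \<le> nat (pair_dist f q)"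
    using ex_has_least_nat[of "atyp_pair m f" _ "\<lambda>q. nat (pair_dist f q)"] by blast
  show thesis
  proof (rule that[of "fst p" "snd p"])
    show "atyp_pair m f (fst p, snd p)"
      using p by simp
    fix a b
    assume "atyp_pair m f (a, b)"
    then show "f (fst p) - f (snd p) \<le> f a - f b"
      using least[of "(a, b)"] p by (cases p) (auto simp: pair_dist_def atyp_pair_def)
  qed
qed

context
  fixes m :: nat and f :: "int \<Rightarrow> int" and i j :: int
  assumes f: "dominant_fun m f" and ij: "atyp_pair m f (i, j)"
    and minimal: "\<And>a b. atyp_pair m f (a, b) \<Longrightarrow> f i - f j \<le> f a - f b"
begin

lemma minimal_pair_matched_pos:
  assumes "1 \<le> b" "f j < f b" "f b < f i"
  shows "f b \<in> f ` {- int m..-1}"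
proof (rule ccontr)
  assume "f b \<notin> f ` {- int m..-1}"
  then have "atyp_pair m f (i, b)"
    using ij assms by (simp add: atyp_pair_iff)
  then show False
    using minimal[of i b] assms by simp
qed

lemma minimal_pair_matched_neg:
  assumes "a \<in> {- int m..-1}" "f j < f a" "f a < f i"
  shows "f a \<in> f ` {1..}"
proof (rule ccontr)
  assume "f a \<notin> f ` {1..}"
  then have "atyp_pair m f (a, j)"
    using ij assms by (simp add: atyp_pair_iff)
  then show False
    using minimal[of a j] assms by simp
qed

text \<open>Walking up from \<open>i\<close> and from the first positive index \<open>j\<^sub>0\<close> with \<open>f j\<^sub>0 < f i\<close>, the
  values interlace: \<open>f (i + k + 1) = f (j\<^sub>0 + k)\<close> as long as \<open>j\<^sub>0 + k < j\<close>, because by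
  minimality every value strictly between \<open>f j\<close> and \<open>f i\<close> is taken on both sides.\<close>

context
  fixes j0 :: int
  assumes j0: "1 \<le> j0" and first_below: "\<And>b. 1 \<le> b \<Longrightarrow> f b < f i \<longleftrightarrow> j0 \<le> b"
begin

lemma interlace_no_gap:
  assumes next_neg: "i + int k + 1 \<le> -1" and "j0 + int k \<le> j"
    and first: "\<And>b. 1 \<le> b \<Longrightarrow> f b < f (i + int k) \<longleftrightarrow> j0 + int k \<le> b"
  shows "f (i + int k + 1) \<le> f (j0 + int k)"
proof (rule ccontr)
  assume gap: "\<not> ?thesis"
  have i: "- int m \<le> i"
    using ij by (simp add: atyp_pair_iff)
  have "f (i + int k + 1) < f (i + int k)"
    using dominant_fun_neg_less[OF f, of "i + int k" "i + int k + 1"] i next_neg by simp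
  moreover have "f (i + int k) \<le> f i"
    using dominant_fun_neg_less[OF f, of i "i + int k"] i next_neg by (cases "k = 0") auto
  moreover have "f j \<le> f (j0 + int k)"
    using dominant_fun_pos_less[OF f, of "j0 + int k" j] j0 \<open>j0 + int k \<le> j\<close>
    by (cases "j0 + int k = j") auto
  ultimately obtain b where b: "1 \<le> b" "f b = f (i + int k + 1)"
    using minimal_pair_matched_neg[of "i + int k + 1"] i next_neg gap by force
  then have "j0 + int k \<le> b"
    using first[OF b(1)] \<open>f (i + int k + 1) < f (i + int k)\<close> by simp
  moreover have "b < j0 + int k"
    using dominant_fun_pos_less_iff[OF f _ b(1), of "j0 + int k"] j0 b(2) gap by simp
  ultimately show False
    by simp
qed

lemma interlace:
  assumes "j0 + int k \<le> j"
  shows "i + int k \<le> -1 \<and> (\<forall>b\<ge>1. f b < f (i + int k) \<longleftrightarrow> j0 + int k \<le> b)"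
  using assms
proof (induction k)
  case 0
  then show ?case
    using ij first_below by (simp add: atyp_pair_iff)
next
  case (Suc k)
  then have IH: "i + int k \<le> -1" "\<And>b. 1 \<le> b \<Longrightarrow> f b < f (i + int k) \<longleftrightarrow> j0 + int k \<le> b"
    and "j0 + int k < j"
    by simp_all
  have i: "- int m \<le> i"
    using ij by (simp add: atyp_pair_iff)
  have b: "1 \<le> j0 + int k" "f j < f (j0 + int k)" "f (j0 + int k) < f (i + int k)"
    using j0 dominant_fun_pos_less[OF f, of "j0 + int k" j] \<open>j0 + int k < j\<close> IH(2) by auto
  moreover have "f (i + int k) \<le> f i"
    using dominant_fun_neg_less[OF f, of i "i + int k"] i IH(1) by (cases "k = 0") auto
  ultimately obtain a where a: "a \<in> {- int m..-1}" "f a = f (j0 + int k)"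
    using minimal_pair_matched_pos[of "j0 + int k"] by force
  then have "i + int k < a"
    using dominant_fun_neg_less_iff[OF f a(1), of "i + int k"] i b(3) IH(1) by simp
  then have "i + int k + 1 \<le> -1"
    using a(1) by simp
  have "f a \<le> f (i + int k + 1)"
  proof (cases "a = i + int k + 1")
    case False
    then show ?thesis
      using dominant_fun_neg_less[OF f, of "i + int k + 1" a] a(1) i \<open>i + int k < a\<close> by simp
  qed simp
  then have "f (i + int k + 1) = f (j0 + int k)"
    using interlace_no_gap[OF \<open>i + int k + 1 \<le> -1\<close> _ IH(2)] \<open>j0 + int k < j\<close> a(2) by simp
  then have shift: "f b < f (i + int k + 1) \<longleftrightarrow> j0 + int k + 1 \<le> b" if "1 \<le> b" for b
    using dominant_fun_pos_less_iff[OF f that b(1)] by auto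
  have "i + int (Suc k) = i + int k + 1" "j0 + int (Suc k) = j0 + int k + 1"
    by simp_all
  then show ?case
    using \<open>i + int k + 1 \<le> -1\<close> shift by presburger
qed

end

lemma minimal_atyp_pair_block:
  obtains j0 r where "1 \<le> j0" "j = j0 + int r" "i + int r \<le> -1"
    "\<And>s. s \<le> r \<Longrightarrow> f (j0 + int s) < f (i + int s)"
    "i + int r + 1 \<le> -1 \<Longrightarrow> f (i + int r + 1) < f j"
    "2 \<le> j0 \<Longrightarrow> f i < f (j0 - 1)"
proof -
  have i: "- int m \<le> i" and j: "1 \<le> j" and "f j < f i"
    and unmatched_i: "f i \<notin> f ` {1..}" and unmatched_j: "f j \<notin> f ` {- int m..-1}"
    using ij by (auto simp: atyp_pair_iff)
  obtain j0 where j0: "1 \<le> j0" and first_below: "\<And>b. 1 \<le> b \<Longrightarrow> f b < f i \<longleftrightarrow> j0 \<le> b"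
    using ex_threshold_of_decreasing[of f "f i"] dominant_funD(3)[OF f] by blast
  have "j0 \<le> j"
    using first_below[OF j] \<open>f j < f i\<close> by simp
  define r where "r = nat (j - j0)"
  have jr: "j = j0 + int r"
    using \<open>j0 \<le> j\<close> by (simp add: r_def)
  note interlace = interlace[OF j0 first_below]
  show thesis
  proof (rule that[OF j0 jr])
    show "i + int r \<le> -1"
      using interlace[of r] jr by simp
    show "f (j0 + int s) < f (i + int s)" if "s \<le> r" for s
      using interlace[of s] that j0 jr by simp
    show "f (i + int r + 1) < f j" if "i + int r + 1 \<le> -1"
    proof -
      have "i + int r + 1 \<in> {- int m..-1}"
        using that i by simp
      then have "f (i + int r + 1) \<noteq> f j"
        using unmatched_j by (metis image_eqI)
      then show ?thesis
        using interlace_no_gap[OF j0 first_below that] interlace[of r] jr by simp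
    qed
    show "f i < f (j0 - 1)" if "2 \<le> j0"
    proof -
      have "j0 - 1 \<in> {1..}"
        using that by simp
      then have "f (j0 - 1) \<noteq> f i"
        using unmatched_i by (metis image_eqI)
      then show ?thesis
        using first_below[of "j0 - 1"] that by simp
    qed
  qed
qed

end

context
  fixes m :: nat and f :: "int \<Rightarrow> int" and i j0 :: int and r :: nat
  assumes f: "dominant_fun m f" and i: "- int m \<le> i" and j0: "1 \<le> j0" and ir: "i + int r \<le> -1"
    and below: "\<And>s. s \<le> r \<Longrightarrow> f (j0 + int s) < f (i + int s)"
    and left_end: "i + int r + 1 \<le> -1 \<Longrightarrow> f (i + int r + 1) < f (j0 + int r)"
    and right_end: "2 \<le> j0 \<Longrightarrow> f i < f (j0 - 1)"
begin

lemma block_swap_on_left: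
  "i \<le> x \<Longrightarrow> x \<le> i + int r \<Longrightarrow> block_swap i (j0 - i) (Suc r) x = x + (j0 - i)"
  by (simp add: block_swap_def)

lemma block_swap_on_right:
  "j0 \<le> x \<Longrightarrow> x \<le> j0 + int r \<Longrightarrow> block_swap i (j0 - i) (Suc r) x = x - (j0 - i)"
  using ir j0 by (simp add: block_swap_def)

lemma block_swap_off_blocks:
  "\<not> (i \<le> x \<and> x \<le> i + int r) \<Longrightarrow> \<not> (j0 \<le> x \<and> x \<le> j0 + int r) \<Longrightarrow>
    block_swap i (j0 - i) (Suc r) x = x"
  by (auto simp: block_swap_def)

lemma block_swap_neg_step:
  assumes "- int m \<le> x" "x < -1"
  shows "f (block_swap i (j0 - i) (Suc r) (x + 1)) < f (block_swap i (j0 - i) (Suc r) x)"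
proof -
  consider "x + 1 < i" | "x + 1 = i" | "i \<le> x" "x < i + int r" | "x = i + int r" | "i + int r < x"
    by linarith
  then show ?thesis
  proof cases
    case 1
    then show ?thesis
      using block_swap_off_blocks dominant_fun_neg_less[OF f, of x "x + 1"] assms j0 by simp
  next
    case 2
    then show ?thesis
      using block_swap_off_blocks[of x] block_swap_on_left[of "x + 1"] below[of 0]
        dominant_fun_neg_less[OF f, of x i] assms j0 by simp
  next
    case 3
    then show ?thesis
      using block_swap_on_left dominant_fun_pos_less[OF f, of "x + (j0 - i)"] j0 by simp
  next
    case 4
    then show ?thesis
      using block_swap_on_left[of x] block_swap_off_blocks[of "x + 1"] left_end assms j0
      by (simp add: algebra_simps)
  next
    case 5
    then show ?thesis
      using block_swap_off_blocks dominant_fun_neg_less[OF f, of x "x + 1"] assms j0 by simp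
  qed
qed

lemma block_swap_pos_step:
  assumes "1 \<le> x"
  shows "f (block_swap i (j0 - i) (Suc r) (x + 1)) < f (block_swap i (j0 - i) (Suc r) x)"
proof -
  consider "x + 1 < j0" | "x + 1 = j0" | "j0 \<le> x" "x < j0 + int r" | "x = j0 + int r"
    | "j0 + int r < x"
    by linarith
  then show ?thesis
  proof cases
    case 1
    then show ?thesis
      using block_swap_off_blocks dominant_fun_pos_less[OF f, of x "x + 1"] assms ir by simp
  next
    case 2
    then have "x = j0 - 1" "2 \<le> j0"
      using assms by simp_all
    then show ?thesis
      using block_swap_off_blocks[of x] block_swap_on_right[of "x + 1"] right_end ir by simp
  next
    case 3
    then show ?thesis
      using block_swap_on_right dominant_fun_neg_less[OF f, of "x - (j0 - i)"] i ir by simp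
  next
    case 4
    then show ?thesis
      using block_swap_on_right[of x] block_swap_off_blocks[of "x + 1"] below[of r]
        dominant_fun_pos_less[OF f, of x "x + 1"] assms ir
      by (simp add: algebra_simps)
  next
    case 5
    then show ?thesis
      using block_swap_off_blocks dominant_fun_pos_less[OF f, of x "x + 1"] assms ir by simp
  qed
qed

text \<open>The exchange moves \<open>f i\<close> to the positive side and \<open>f (j\<^sub>0 + r)\<close> to the negative side.\<close>

lemma dominant_fun_block_swap: "dominant_fun m (f \<circ> block_swap i (j0 - i) (Suc r))"
proof -
  have "\<not> (i \<le> x \<and> x \<le> i + int r)" "\<not> (j0 \<le> x \<and> x \<le> j0 + int r)" if "x \<notin> idx m" for x
    using that i ir j0 by (auto simp: idx_eq)
  then have "f (block_swap i (j0 - i) (Suc r) x) = 0" if "x \<notin> idx m" for x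
    using that block_swap_off_blocks dominant_funD(1)[OF f] by simp
  moreover obtain N where N: "\<forall>x\<ge>N. f x = 1 - x"
    using dominant_funD(4)[OF f] by blast
  then have "f (block_swap i (j0 - i) (Suc r) x) = 1 - x" if "max N (j0 + int r + 1) \<le> x" for x
    using that block_swap_off_blocks[of x] ir j0 by simp
  ultimately show ?thesis
    unfolding dominant_fun_def comp_def using block_swap_neg_step block_swap_pos_step by blast
qed

end

lemma ex_bruhat_less_if_atypical:
  assumes f: "dominant_fun m f" and "atypical_indices m f \<noteq> {}"
  shows "\<exists>g. dominant_fun m g \<and> bruhat_less m g f"
proof -
  obtain i j where ij: "atyp_pair m f (i, j)"
    and minimal: "\<And>a b. atyp_pair m f (a, b) \<Longrightarrow> f i - f j \<le> f a - f b"
    using ex_minimal_atyp_pair[OF assms] by blast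
  obtain j0 r where j0: "1 \<le> j0" and ir: "i + int r \<le> -1"
    and below: "\<And>s. s \<le> r \<Longrightarrow> f (j0 + int s) < f (i + int s)"
    and left_end: "i + int r + 1 \<le> -1 \<Longrightarrow> f (i + int r + 1) < f j" and "j = j0 + int r"
    and right_end: "2 \<le> j0 \<Longrightarrow> f i < f (j0 - 1)"
    using minimal_atyp_pair_block[OF f ij minimal] by blast
  have i: "- int m \<le> i"
    using ij by (simp add: atyp_pair_iff)
  have "dominant_fun m (f \<circ> block_swap i (j0 - i) (Suc r))"
    using dominant_fun_block_swap[OF f i j0 ir below] left_end right_end \<open>j = j0 + int r\<close> by simp
  moreover have "bruhat_less m (f \<circ> block_swap i (j0 - i) (Suc r)) f"
  proof (rule bruhat_less_block_swap)
    show "int (Suc r) \<le> j0 - i"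
      using ir j0 by simp
    fix s
    assume "s < Suc r"
    moreover have "i + int s + (j0 - i) = j0 + int s"
      by simp
    ultimately show "i + int s \<in> idx m \<and> i + int s + (j0 - i) \<in> idx m \<and>
        f (i + int s + (j0 - i)) < f (i + int s)"
      using i ir j0 below[of s] by (simp add: idx_eq ac_simps)
  qed simp
  ultimately show ?thesis
    by blast
qed

lemma J_typical_iff:
  assumes lam: "lam \<in> Xplus_red m"
  shows "J_typical m lam \<longleftrightarrow> atypical_indices m (f_lam m lam) = {}"
proof -
  have "J_typical m lam \<longleftrightarrow> (\<forall>g. dominant_fun m g \<longrightarrow> \<not> bruhat_less m g (f_lam m lam))"
    unfolding J_typical_def dominant_fun_iff_f_lam by blast
  then show ?thesis
    using not_bruhat_less_if_typical[OF dominant_fun_f_lam[OF lam]]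
      ex_bruhat_less_if_atypical[OF dominant_fun_f_lam[OF lam]] by blast
qed

theorem theorem6p4:
  fixes m :: nat and lam :: "int \<Rightarrow> int"
  assumes "lam \<in> Xplus_red m"
  shows "J_atyp_degree m lam = atyp_degree m (natural m lam) \<and>
         (J_typical m lam \<longleftrightarrow> typical m (natural m lam))"
proof
  show "J_atyp_degree m lam = atyp_degree m (natural m lam)"
    using card_sigma_plus[OF dominant_fun_f_lam[OF assms]] atyp_degree_natural[OF assms]
    by (simp add: J_atyp_degree_def)
  show "J_typical m lam \<longleftrightarrow> typical m (natural m lam)"
    by (simp add: J_typical_iff[OF assms] typical_def atyp_degree_natural[OF assms]
        finite_atypical_indices)
qed

end
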